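(* Let $2\le N\le 4$, $k=2$, $T=2$, and suppose $p_{11}<p_{01}$. Then for every initial belief vector $\omega(1)\in[0,1]^N$, the myopic sensing policy (with any tie-breaking) is optimal. That is, its expected total reward over the two slots equals the maximum expected total reward over the two slots achievable by any sensing policy.
   Context: Opportunistic spectrum access model. There are $N$ channels. The state $S_i(t)\in\{0,1\}$ of channel $i$ in slot $t$ (0 = busy, 1 = idle) evolves as a two-state discrete-time Markov chain with transition probabilities $p_{ij}=\Pr(S_i(t+1)=j\mid S_i(t)=i)$. The chains are independent across channels and all have the same transition probabilities $p_{01},p_{11}\in[0,1]$. The initial states are independent with $\Pr(S_i(1)=1)=\omega_i(1)$. In each slot $t=1,\dots,T$, a secondary user chooses a set $\mathcal{A}(t)$ of exactly $k$ channels to sense, based on past actions and observations. It observes the states of the sensed channels and obtains reward $1$ if at least one sensed channel is idle, and reward $0$ otherwise. The belief $\omega_i(t)$ is the conditional probability that $S_i(t)=1$ given past actions and observations. The expected immediate reward of action $\mathcal{A}(t)$ is $1-\prod_{i\in\mathcal{A}(t)}(1-\omega_i(t))$. Beliefs update as follows: $\omega_i(t+1)=p_{11}$ if $i\in\mathcal{A}(t)$ and $S_i(t)=1$; $\omega_i(t+1)=p_{01}$ if $i\in\mathcal{A}(t)$ and $S_i(t)=0$; and $\omega_i(t+1)=\tau(\omega_i(t))$ if $i\notin\mathcal{A}(t)$, where $\tau(\omega)=\omega p_{11}+(1-\omega)p_{01}$. A policy maps histories to actions. The objective is to maximize the expected total (equivalently, average) reward over slots $1,\dots,T$. The myopic sensing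 policy senses, in every slot, $k$ channels with the largest current beliefs $\omega_i(t)$, i.e. it maximizes the immediate expected reward. *)

theory Defs
  imports Complex_Main "HOL-Library.FuncSet"
begin

text \<open>An observation of a sensed set A is a function A ->E bool (True = idle).
  A (deterministic) two-slot policy is a pair (A1, f): the slot-1 action A1
  and the slot-2 action f o chosen as a function of the slot-1 observation o.\<close>

definition tau :: "real \<Rightarrow> real \<Rightarrow> real \<Rightarrow> real" where
  "tau p01 p11 w = w * p11 + (1 - w) * p01"

definition upd_belief ::
  "real \<Rightarrow> real \<Rightarrow> (nat \<Rightarrow> real) \<Rightarrow> nat set \<Rightarrow> (nat \<Rightarrow> bool) \<Rightarrow> nat \<Rightarrow> real" where
  "upd_belief p01 p11 \<omega> A obs i =
     (if i \<in> A then (if obs i then p11 else p01) else tau p01 p11 (\<omega> i))"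

definition imm_reward :: "(nat \<Rightarrow> real) \<Rightarrow> nat set \<Rightarrow> real" where
  "imm_reward \<omega> A = 1 - (\<Prod>i\<in>A. 1 - \<omega> i)"

definition obs_prob :: "(nat \<Rightarrow> real) \<Rightarrow> nat set \<Rightarrow> (nat \<Rightarrow> bool) \<Rightarrow> real" where
  "obs_prob \<omega> A obs = (\<Prod>i\<in>A. if obs i then \<omega> i else 1 - \<omega> i)"

definition observations :: "nat set \<Rightarrow> (nat \<Rightarrow> bool) set" where
  "observations A = PiE A (\<lambda>_. UNIV)"

definition valid_action :: "nat \<Rightarrow> nat \<Rightarrow> nat set \<Rightarrow> bool" where
  "valid_action N k A \<longleftrightarrow> A \<subseteq> {..<N} \<and> card A = k"

type_synonym policy2 = "nat set \<times> ((nat \<Rightarrow> bool) \<Rightarrow> nat set)"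

definition is_policy2 :: "nat \<Rightarrow> nat \<Rightarrow> policy2 \<Rightarrow> bool" where
  "is_policy2 N k \<pi> \<longleftrightarrow> valid_action N k (fst \<pi>) \<and>
     (\<forall>obs \<in> observations (fst \<pi>). valid_action N k (snd \<pi> obs))"

definition value2 :: "real \<Rightarrow> real \<Rightarrow> (nat \<Rightarrow> real) \<Rightarrow> policy2 \<Rightarrow> real" where
  "value2 p01 p11 \<omega> \<pi> =
     imm_reward \<omega> (fst \<pi>) +
     (\<Sum>obs \<in> observations (fst \<pi>).
        obs_prob \<omega> (fst \<pi>) obs *
        imm_reward (upd_belief p01 p11 \<omega> (fst \<pi>) obs) (snd \<pi> obs))"

definition myopic_action :: "nat \<Rightarrow> nat \<Rightarrow> (nat \<Rightarrow> real) \<Rightarrow> nat set \<Rightarrow> bool" where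
  "myopic_action N k \<omega> A \<longleftrightarrow> valid_action N k A \<and>
     (\<forall>i\<in>A. \<forall>j\<in>{..<N} - A. \<omega> j \<le> \<omega> i)"

definition myopic_policy2 ::
  "nat \<Rightarrow> nat \<Rightarrow> real \<Rightarrow> real \<Rightarrow> (nat \<Rightarrow> real) \<Rightarrow> policy2 \<Rightarrow> bool" where
  "myopic_policy2 N k p01 p11 \<omega> \<pi> \<longleftrightarrow> myopic_action N k \<omega> (fst \<pi>) \<and>
     (\<forall>obs \<in> observations (fst \<pi>).
        myopic_action N k (upd_belief p01 p11 \<omega> (fst \<pi>) obs) (snd \<pi> obs))"

end

theory Submission
  imports Defs
begin

(* The proof has a general part and a computational part.
   (1) For every number k of sensed channels, an action made of k largest beliefs maximises
       the immediate reward (an exchange argument on the product of busy probabilities).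
       Hence in the last slot the myopic choice is optimal, and the value of every two-slot
       policy is bounded by the one-step lookahead value of its first action, with equality
       for the myopic policy. So the myopic policy is optimal as soon as its first action
       maximises the lookahead value.
   (2) For k = 2 and N = 3, 4, sensing {a,b} first with remaining channels c, d gives the
       lookahead value 2 - expected_misses u e (w a) (w b) (w c) (w d), where u = 1 - p01,
       e = p01 - p11 and the expected number of slots in which every sensed channel is busy
       is an explicit polynomial (for N = 3 the missing fourth channel enters with belief 1).
       This polynomial is symmetric in the sensed and in the unsensed pair, and exchanging a
       sensed channel with an unsensed channel of smaller belief does not decrease it; hence
       it is minimal when the two largest beliefs are sensed, which is the myopic action. *)


lemma tau_alt: "tau p01 p11 w = p01 - (p01 - p11) * w"
  unfolding tau_def by (simp add: algebra_simps)

lemma one_minus_tau: "1 - tau p01 p11 w = (1 - p01) + (p01 - p11) * w"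
  unfolding tau_alt by simp

lemma tau_le_one:
  assumes "0 \<le> w" "w \<le> 1" "p01 \<le> 1" "p11 \<le> 1"
  shows "tau p01 p11 w \<le> 1"
proof -
  have "w * p11 \<le> w * 1" "(1 - w) * p01 \<le> (1 - w) * 1"
    using assms by (intro mult_left_mono; simp)+
  then show ?thesis unfolding tau_def by simp
qed

lemma tau_bounds:
  assumes "0 \<le> w" "w \<le> 1" "p11 \<le> p01"
  shows "p11 \<le> tau p01 p11 w" "tau p01 p11 w \<le> p01"
proof -
  have "(p01 - p11) * w \<le> (p01 - p11) * 1" using assms by (intro mult_left_mono) auto
  moreover have "0 \<le> (p01 - p11) * w" using assms by simp
  ultimately show "p11 \<le> tau p01 p11 w" "tau p01 p11 w \<le> p01" unfolding tau_alt by auto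
qed

lemma tau_antimono:
  assumes "w \<le> w'" "p11 \<le> p01"
  shows "tau p01 p11 w' \<le> tau p01 p11 w"
proof -
  have "(p01 - p11) * w \<le> (p01 - p11) * w'" using assms by (intro mult_left_mono) auto
  then show ?thesis unfolding tau_alt by auto
qed

lemma upd_belief_le_one:
  assumes "0 \<le> \<omega> i" "\<omega> i \<le> 1" "p01 \<le> 1" "p11 \<le> 1"
  shows "upd_belief p01 p11 \<omega> A obs i \<le> 1"
  using assms tau_le_one unfolding upd_belief_def by auto


section \<open>The last slot: myopic sensing maximises the immediate reward\<close>

text \<open>Exchange argument, for any number k of sensed channels: the channels dropped from a myopic
  action B have beliefs at least t, those added in B' at most t, so the busy probability of the
  dropped part is at most (1-t)^m, which is at most that of the added part.\<close>
lemma myopic_busy_prod_le: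
  fixes x :: "nat \<Rightarrow> real"
  assumes B: "myopic_action N k x B" and B': "valid_action N k B'"
    and x_le: "\<forall>i<N. x i \<le> 1"
  shows "(\<Prod>i\<in>B. 1 - x i) \<le> (\<Prod>i\<in>B'. 1 - x i)"
proof -
  have sub: "B \<subseteq> {..<N}" "B' \<subseteq> {..<N}" and card: "card B = k" "card B' = k"
    using B B' by (auto simp: myopic_action_def valid_action_def)
  have fin: "finite B" "finite B'" using sub finite_subset by auto
  show ?thesis
  proof (cases "B \<subseteq> B'")
    case True
    then have "B = B'" using card_subset_eq[OF fin(2) True] card by simp
    then show ?thesis by simp
  next
    case False
    define D where "D = B - B'"
    define E where "E = B' - B"
    have "D \<noteq> {}" "finite D" using False fin unfolding D_def by auto
    have card_DE: "card D = card E"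
      using card fin unfolding D_def E_def by (simp add: card_Diff_subset_Int Int_commute)
    define t where "t = Min (x ` D)"
    have t_le: "t \<le> x i" if "i \<in> D" for i
      unfolding t_def using \<open>finite D\<close> that by simp
    have "t \<in> x ` D" unfolding t_def using \<open>finite D\<close> \<open>D \<noteq> {}\<close> by (intro Min_in) auto
    then obtain i0 where i0: "i0 \<in> D" "x i0 = t" by auto
    have le_t: "x j \<le> t" if "j \<in> E" for j
      using B i0 that sub unfolding myopic_action_def D_def E_def by auto
    have x_le_D: "x i \<le> 1" if "i \<in> D" for i using x_le sub that unfolding D_def by auto
    have "(\<Prod>i\<in>D. 1 - x i) \<le> (\<Prod>i\<in>D. 1 - t)"
      by (rule prod_mono) (use t_le x_le_D in auto)
    also have "\<dots> = (\<Prod>j\<in>E. 1 - t)" using card_DE by simp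
    also have "\<dots> \<le> (\<Prod>j\<in>E. 1 - x j)"
      by (rule prod_mono) (use le_t x_le_D i0 in force)
    finally have DE: "(\<Prod>i\<in>D. 1 - x i) \<le> (\<Prod>j\<in>E. 1 - x j)" .
    have common: "0 \<le> (\<Prod>i\<in>B \<inter> B'. 1 - x i)"
      by (rule prod_nonneg) (use x_le sub in auto)
    have "(\<Prod>i\<in>B. 1 - x i) = (\<Prod>i\<in>B \<inter> B'. 1 - x i) * (\<Prod>i\<in>D. 1 - x i)"
      unfolding D_def using fin(1) by (rule prod.Int_Diff)
    also have "\<dots> \<le> (\<Prod>i\<in>B \<inter> B'. 1 - x i) * (\<Prod>j\<in>E. 1 - x j)"
      using DE common by (rule mult_left_mono)
    also have "\<dots> = (\<Prod>i\<in>B'. 1 - x i)"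
      unfolding E_def using prod.Int_Diff[OF fin(2), of "\<lambda>i. 1 - x i" B] by (metis Int_commute)
    finally show ?thesis .
  qed
qed

definition best_reward :: "nat \<Rightarrow> nat \<Rightarrow> (nat \<Rightarrow> real) \<Rightarrow> real" where
  "best_reward N k x = Max (imm_reward x ` {B. valid_action N k B})"

lemma finite_valid_actions: "finite {B. valid_action N k B}"
  by (rule finite_subset[of _ "Pow {..<N}"]) (auto simp: valid_action_def)

lemma imm_reward_le_best: "valid_action N k B \<Longrightarrow> imm_reward x B \<le> best_reward N k x"
  unfolding best_reward_def by (rule Max_ge) (auto intro: finite_valid_actions)

lemma best_reward_myopic:
  assumes "myopic_action N k x B" and "\<forall>i<N. x i \<le> 1"
  shows "best_reward N k x = imm_reward x B"
  unfolding best_reward_def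
proof (rule Max_eqI)
  show "imm_reward x B \<in> imm_reward x ` {B. valid_action N k B}"
    using assms(1) by (auto simp: myopic_action_def)
  fix y assume "y \<in> imm_reward x ` {B. valid_action N k B}"
  then obtain B' where "valid_action N k B'" "y = imm_reward x B'" by auto
  then show "y \<le> imm_reward x B"
    using myopic_busy_prod_le[OF assms(1) _ assms(2)] unfolding imm_reward_def by auto
qed (auto intro: finite_valid_actions)


section \<open>Reduction to the one-step lookahead value of the first action\<close>

definition lookahead_value :: "nat \<Rightarrow> nat \<Rightarrow> real \<Rightarrow> real \<Rightarrow> (nat \<Rightarrow> real) \<Rightarrow> nat set \<Rightarrow> real" where
  "lookahead_value N k p01 p11 \<omega> A = imm_reward \<omega> A +
     (\<Sum>obs \<in> observations A. obs_prob \<omega> A obs * best_reward N k (upd_belief p01 p11 \<omega> A obs))"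

lemma value2_le_lookahead:
  assumes \<pi>: "is_policy2 N k \<pi>" and \<omega>: "\<forall>i<N. 0 \<le> \<omega> i \<and> \<omega> i \<le> 1"
  shows "value2 p01 p11 \<omega> \<pi> \<le> lookahead_value N k p01 p11 \<omega> (fst \<pi>)"
  unfolding value2_def lookahead_value_def
proof (intro add_left_mono sum_mono mult_left_mono)
  fix obs assume "obs \<in> observations (fst \<pi>)"
  then show "imm_reward (upd_belief p01 p11 \<omega> (fst \<pi>) obs) (snd \<pi> obs)
          \<le> best_reward N k (upd_belief p01 p11 \<omega> (fst \<pi>) obs)"
    using \<pi> unfolding is_policy2_def by (auto intro: imm_reward_le_best)
  have "fst \<pi> \<subseteq> {..<N}" using \<pi> unfolding is_policy2_def valid_action_def by auto
  then show "0 \<le> obs_prob \<omega> (fst \<pi>) obs"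
    unfolding obs_prob_def using \<omega> by (intro prod_nonneg) auto
qed

lemma value2_myopic:
  assumes "myopic_policy2 N k p01 p11 \<omega> \<pi>" and \<omega>: "\<forall>i<N. 0 \<le> \<omega> i \<and> \<omega> i \<le> 1"
    and "p01 \<le> 1" "p11 \<le> 1"
  shows "value2 p01 p11 \<omega> \<pi> = lookahead_value N k p01 p11 \<omega> (fst \<pi>)"
  unfolding value2_def lookahead_value_def
proof (intro arg_cong2[where f="(+)"] refl sum.cong arg_cong2[where f="(*)"])
  fix obs assume "obs \<in> observations (fst \<pi>)"
  then show "imm_reward (upd_belief p01 p11 \<omega> (fst \<pi>) obs) (snd \<pi> obs)
           = best_reward N k (upd_belief p01 p11 \<omega> (fst \<pi>) obs)"
    using assms by (intro best_reward_myopic[symmetric])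
      (auto simp: myopic_policy2_def intro: upd_belief_le_one)
qed

text \<open>Only finitely many values arise, since a policy matters only through its first action and
  its responses to the finitely many observations of that action.\<close>
lemma finite_policy_values: "finite (value2 p01 p11 \<omega> ` {\<pi>. is_policy2 N k \<pi>})"
proof -
  define T where "T = (SIGMA A:Pow {..<N}. PiE (observations A) (\<lambda>_. Pow {..<N}))"
  have "finite (observations A)" if "A \<subseteq> {..<N}" for A
    unfolding observations_def using that finite_subset by (intro finite_PiE) auto
  then have "finite T" unfolding T_def by (intro finite_SigmaI finite_PiE) auto
  moreover have "value2 p01 p11 \<omega> ` {\<pi>. is_policy2 N k \<pi>} \<subseteq> value2 p01 p11 \<omega> ` T"
  proof
    fix v assume "v \<in> value2 p01 p11 \<omega> ` {\<pi>. is_policy2 N k \<pi>}"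
    then obtain A g where P: "is_policy2 N k (A, g)" and v: "v = value2 p01 p11 \<omega> (A, g)" by auto
    have "(A, restrict g (observations A)) \<in> T"
      using P unfolding T_def is_policy2_def valid_action_def by auto
    moreover have "value2 p01 p11 \<omega> (A, g) = value2 p01 p11 \<omega> (A, restrict g (observations A))"
      unfolding value2_def by (auto intro!: sum.cong)
    ultimately show "v \<in> value2 p01 p11 \<omega> ` T" using v by blast
  qed
  ultimately show ?thesis using finite_subset by blast
qed

lemma myopic_policy2_optimal:
  assumes my: "myopic_policy2 N k p01 p11 \<omega> \<pi>m" and \<omega>: "\<forall>i<N. 0 \<le> \<omega> i \<and> \<omega> i \<le> 1"
    and p: "p01 \<le> 1" "p11 \<le> 1"
    and best_first: "\<And>A. valid_action N k A \<Longrightarrow>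
       lookahead_value N k p01 p11 \<omega> A \<le> lookahead_value N k p01 p11 \<omega> (fst \<pi>m)"
  shows "is_policy2 N k \<pi>m \<and>
    value2 p01 p11 \<omega> \<pi>m = (MAX \<pi> \<in> {\<pi>. is_policy2 N k \<pi>}. value2 p01 p11 \<omega> \<pi>)"
proof
  show pol: "is_policy2 N k \<pi>m"
    using my unfolding myopic_policy2_def is_policy2_def myopic_action_def by auto
  show "value2 p01 p11 \<omega> \<pi>m = (MAX \<pi> \<in> {\<pi>. is_policy2 N k \<pi>}. value2 p01 p11 \<omega> \<pi>)"
  proof (rule Max_eqI[OF finite_policy_values, symmetric])
    show "value2 p01 p11 \<omega> \<pi>m \<in> value2 p01 p11 \<omega> ` {\<pi>. is_policy2 N k \<pi>}" using pol by auto
    fix y assume "y \<in> value2 p01 p11 \<omega> ` {\<pi>. is_policy2 N k \<pi>}"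
    then obtain \<pi> where P: "is_policy2 N k \<pi>" and y: "y = value2 p01 p11 \<omega> \<pi>" by auto
    have "y \<le> lookahead_value N k p01 p11 \<omega> (fst \<pi>)" using value2_le_lookahead[OF P \<omega>] y by simp
    also have "\<dots> \<le> lookahead_value N k p01 p11 \<omega> (fst \<pi>m)"
      using P unfolding is_policy2_def by (auto intro: best_first)
    also have "\<dots> = value2 p01 p11 \<omega> \<pi>m" using value2_myopic[OF my \<omega> p] by simp
    finally show "y \<le> value2 p01 p11 \<omega> \<pi>m" .
  qed
qed


definition obs_pair :: "nat \<Rightarrow> nat \<Rightarrow> bool \<Rightarrow> bool \<Rightarrow> nat \<Rightarrow> bool" where
  "obs_pair a b v1 v2 = (\<lambda>i. if i = a then v1 else if i = b then v2 else undefined)"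

lemma observations_pair:
  assumes "a \<noteq> b"
  shows "observations {a,b} = (\<lambda>(v1,v2). obs_pair a b v1 v2) ` UNIV"
proof
  show "observations {a,b} \<subseteq> (\<lambda>(v1,v2). obs_pair a b v1 v2) ` UNIV"
  proof
    fix f assume f: "f \<in> observations {a,b}"
    have "f = obs_pair a b (f a) (f b)"
    proof
      fix i show "f i = obs_pair a b (f a) (f b) i"
        using f assms PiE_arb[of f "{a,b}" "\<lambda>_. UNIV" i]
        unfolding obs_pair_def observations_def by auto
    qed
    then show "f \<in> (\<lambda>(v1,v2). obs_pair a b v1 v2) ` UNIV"
      by (intro image_eqI[where x="(f a, f b)"]) auto
  qed
qed (auto simp: obs_pair_def observations_def PiE_iff extensional_def)

lemma sum_observations_pair:
  assumes "a \<noteq> b"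
  shows "(\<Sum>obs\<in>observations {a,b}. g obs) =
    g (obs_pair a b True True) + g (obs_pair a b True False) +
    g (obs_pair a b False True) + g (obs_pair a b False False)"
proof -
  have inj: "inj (\<lambda>(v1,v2). obs_pair a b v1 v2)"
  proof (rule injI, clarify)
    fix v1 v2 w1 w2 assume "obs_pair a b v1 v2 = obs_pair a b w1 w2"
    then have "obs_pair a b v1 v2 a = obs_pair a b w1 w2 a"
      "obs_pair a b v1 v2 b = obs_pair a b w1 w2 b" by auto
    then show "v1 = w1 \<and> v2 = w2" using assms unfolding obs_pair_def by auto
  qed
  have outcomes: "(UNIV :: (bool \<times> bool) set) = {(True,True),(True,False),(False,True),(False,False)}"
    by auto
  show ?thesis
    unfolding observations_pair[OF assms] outcomes
    by (subst sum.reindex[OF inj_on_subset[OF inj subset_UNIV]]) (simp_all add: add.assoc)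
qed

lemma obs_prob_pair:
  assumes "a \<noteq> b"
  shows "obs_prob \<omega> {a,b} (obs_pair a b v1 v2) =
     (if v1 then \<omega> a else 1 - \<omega> a) * (if v2 then \<omega> b else 1 - \<omega> b)"
  using assms unfolding obs_prob_def obs_pair_def by auto

lemma upd_belief_pair:
  assumes "a \<noteq> b"
  shows "upd_belief p01 p11 \<omega> {a,b} (obs_pair a b v1 v2) i =
     (if i = a then (if v1 then p11 else p01) else if i = b then (if v2 then p11 else p01)
      else tau p01 p11 (\<omega> i))"
  using assms unfolding upd_belief_def obs_pair_def by auto

lemma lookahead_value_pair:
  assumes "a \<noteq> b"
  shows "lookahead_value N k p01 p11 \<omega> {a,b} = 1 - (1 - \<omega> a) * (1 - \<omega> b)
    + \<omega> a * \<omega> b * best_reward N k (upd_belief p01 p11 \<omega> {a,b} (obs_pair a b True True))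
    + \<omega> a * (1 - \<omega> b) * best_reward N k (upd_belief p01 p11 \<omega> {a,b} (obs_pair a b True False))
    + (1 - \<omega> a) * \<omega> b * best_reward N k (upd_belief p01 p11 \<omega> {a,b} (obs_pair a b False True))
    + (1 - \<omega> a) * (1 - \<omega> b) * best_reward N k (upd_belief p01 p11 \<omega> {a,b} (obs_pair a b False False))"
  using assms unfolding lookahead_value_def sum_observations_pair[OF assms] obs_prob_pair[OF assms]
  by (simp add: imm_reward_def add.assoc)

lemma best_reward_pair:
  assumes "i < N" "j < N" "i \<noteq> j"
    and "\<And>l. l < N \<Longrightarrow> l \<noteq> i \<Longrightarrow> l \<noteq> j \<Longrightarrow> x l \<le> x i \<and> x l \<le> x j"
    and "\<forall>l<N. x l \<le> 1"
  shows "best_reward N 2 x = 1 - (1 - x i) * (1 - x j)"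
proof -
  have "myopic_action N 2 x {i,j}"
    using assms unfolding myopic_action_def valid_action_def by auto
  then show ?thesis using best_reward_myopic assms(3,5) by (simp add: imm_reward_def)
qed


section \<open>The expected number of missed slots\<close>

text \<open>For sensed beliefs x, y and unsensed beliefs z, w, the expected number of the two slots in
  which both sensed channels are busy, when the second slot is sensed myopically; here
  u = 1 - p01 and e = p01 - p11, so that an unsensed channel of belief z is busy in the next slot
  with probability u + e z, and a channel seen idle (busy) with probability u + e (u).\<close>
definition expected_misses :: "real \<Rightarrow> real \<Rightarrow> real \<Rightarrow> real \<Rightarrow> real \<Rightarrow> real \<Rightarrow> real" where
  "expected_misses u e x y z w =
     (1-x)*(1-y)*(1+u^2) + ((1-x)*y + x*(1-y)) * u * (u + e * min z w) + x*y*(u+e*z)*(u+e*w)"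

lemma expected_misses_sym_sensed: "expected_misses u e x y z w = expected_misses u e y x z w"
  unfolding expected_misses_def by (simp add: algebra_simps)

lemma expected_misses_sym_unsensed: "expected_misses u e x y z w = expected_misses u e x y w z"
  unfolding expected_misses_def by (simp add: algebra_simps min.commute)

lemma expected_misses_exchange:
  assumes x: "0 \<le> x" "x \<le> 1" and y: "y \<le> 1" and z: "0 \<le> z" "z \<le> 1"
    and w: "0 \<le> w" "w \<le> 1" and zy: "z \<le> y" and u: "0 \<le> u" and e: "0 \<le> e" and ue: "u + e \<le> 1"
  shows "expected_misses u e x y z w \<le> expected_misses u e x z y w"
proof -
  have u_le: "u * (u + e * v) \<le> 1 + u^2" if "0 \<le> v" "v \<le> 1" for v
  proof -
    have "u * (u + e * v) \<le> 1 * 1"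
      using that u e ue mult_left_le[of v e] by (intro mult_mono) auto
    then show ?thesis using zero_le_power2[of u] by linarith
  qed
  consider "w \<le> z" | "z < w" "w \<le> y" | "y < w" by linarith
  then show ?thesis
  proof cases
    case 1
    have "expected_misses u e x z y w - expected_misses u e x y z w
        = (y-z)*(1-x)*(1+u^2-u*(u+e*w))"
      using 1 zy unfolding expected_misses_def
      by (simp add: min_absorb2 algebra_simps power2_eq_square)
    moreover have "0 \<le> (y-z)*(1-x)*(1+u^2-u*(u+e*w))"
      using zy x u_le[OF w] by (intro mult_nonneg_nonneg) auto
    ultimately show ?thesis by linarith
  next
    case 2
    have "expected_misses u e x z y w - expected_misses u e x y z w =
        (y-z)*(1-x)*(1+u^2-u*(u+e*z)) + u*e*(w-z)*(x*(1-y)+z*(1-x))"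
      using 2 zy unfolding expected_misses_def
      by (simp add: min_absorb1 min_absorb2 algebra_simps power2_eq_square)
    moreover have "0 \<le> (y-z)*(1-x)*(1+u^2-u*(u+e*z))"
      using zy x u_le[OF z] by (intro mult_nonneg_nonneg) auto
    moreover have "0 \<le> u*e*(w-z)*(x*(1-y)+z*(1-x))"
      using u e 2 x y z by (intro mult_nonneg_nonneg add_nonneg_nonneg) auto
    ultimately show ?thesis by linarith
  next
    case 3
    have "expected_misses u e x z y w - expected_misses u e x y z w
        = (y-z)*((1-x)+x*u*(e-e*w))"
      using 3 zy unfolding expected_misses_def
      by (simp add: min_absorb1 min_absorb2 algebra_simps power2_eq_square)
    moreover have "0 \<le> (y-z)*((1-x)+x*u*(e-e*w))"
      using zy x u e w mult_left_le[of w e] by (intro mult_nonneg_nonneg add_nonneg_nonneg) auto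
    ultimately show ?thesis by linarith
  qed
qed


section \<open>Closed form of the lookahead value for N = 3 and N = 4\<close>

text \<open>Sensing {a,b} with remaining channels c, d (where c has the smaller belief, hence the larger
  propagated belief): after both idle the best pair is {c,d}, after exactly one idle it is the
  busy channel together with c, after both busy it is {a,b} again.\<close>
lemma lookahead_value_four:
  assumes chans: "{..<N} = {a,b,c,d}" and dist: "a\<noteq>b" "a\<noteq>c" "a\<noteq>d" "b\<noteq>c" "b\<noteq>d" "c\<noteq>d"
    and cd: "\<omega> c \<le> \<omega> d" and wc: "0 \<le> \<omega> c" "\<omega> c \<le> 1" and wd: "0 \<le> \<omega> d" "\<omega> d \<le> 1"
    and p: "0 \<le> p11" "p11 \<le> p01" "p01 \<le> 1"
  shows "lookahead_value N 2 p01 p11 \<omega> {a,b} =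
    2 - expected_misses (1-p01) (p01-p11) (\<omega> a) (\<omega> b) (\<omega> c) (\<omega> d)"
proof -
  define x where "x v1 v2 = upd_belief p01 p11 \<omega> {a,b} (obs_pair a b v1 v2)" for v1 v2
  have xa: "x v1 v2 a = (if v1 then p11 else p01)"
   and xb: "x v1 v2 b = (if v2 then p11 else p01)"
   and xc: "x v1 v2 c = tau p01 p11 (\<omega> c)"
   and xd: "x v1 v2 d = tau p01 p11 (\<omega> d)" for v1 v2
    unfolding x_def using dist by (auto simp: upd_belief_pair)
  have tc: "p11 \<le> tau p01 p11 (\<omega> c)" "tau p01 p11 (\<omega> c) \<le> p01" using tau_bounds wc p by auto
  have td: "p11 \<le> tau p01 p11 (\<omega> d)" "tau p01 p11 (\<omega> d) \<le> p01" using tau_bounds wd p by auto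
  have tcd: "tau p01 p11 (\<omega> d) \<le> tau p01 p11 (\<omega> c)" using tau_antimono cd p by auto
  have lt: "a < N" "b < N" "c < N" "d < N" using chans by auto
  have chan: "l = a \<or> l = b \<or> l = c \<or> l = d" if "l < N" for l using chans that by blast
  have x_le: "\<forall>l<N. x v1 v2 l \<le> 1" for v1 v2 using chan xa xb xc xd tc td p by fastforce
  note facts = lt dist chan x_le xa xb xc xd tc td tcd p
  have "best_reward N 2 (x True True) = 1 - (1 - x True True c) * (1 - x True True d)"
    by (rule best_reward_pair) (use facts in fastforce)+
  moreover have "best_reward N 2 (x True False) = 1 - (1 - x True False b) * (1 - x True False c)"
    by (rule best_reward_pair) (use facts in fastforce)+
  moreover have "best_reward N 2 (x False True) = 1 - (1 - x False True a) * (1 - x False True c)"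
    by (rule best_reward_pair) (use facts in fastforce)+
  moreover have "best_reward N 2 (x False False) = 1 - (1 - x False False a) * (1 - x False False b)"
    by (rule best_reward_pair) (use facts in fastforce)+
  ultimately have "lookahead_value N 2 p01 p11 \<omega> {a,b} = 1 - (1 - \<omega> a) * (1 - \<omega> b)
     + \<omega> a * \<omega> b * (1 - (1 - tau p01 p11 (\<omega> c)) * (1 - tau p01 p11 (\<omega> d)))
     + \<omega> a * (1 - \<omega> b) * (1 - (1 - p01) * (1 - tau p01 p11 (\<omega> c)))
     + (1 - \<omega> a) * \<omega> b * (1 - (1 - p01) * (1 - tau p01 p11 (\<omega> c)))
     + (1 - \<omega> a) * (1 - \<omega> b) * (1 - (1 - p01) * (1 - p01))"
    unfolding lookahead_value_pair[OF dist(1)] x_def[symmetric] by (simp add: xa xb xc xd)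
  also have "\<dots> = 2 - expected_misses (1-p01) (p01-p11) (\<omega> a) (\<omega> b) (\<omega> c) (\<omega> d)"
    unfolding expected_misses_def one_minus_tau min_absorb1[OF cd]
    by (simp add: algebra_simps power2_eq_square)
  finally show ?thesis .
qed

text \<open>With three channels the remaining channel c is always sensed in the second slot; the
  result is the four-channel formula with a fictitious fourth channel of belief 1.\<close>
lemma lookahead_value_three:
  assumes chans: "{..<N} = {a,b,c}" and dist: "a\<noteq>b" "a\<noteq>c" "b\<noteq>c"
    and wc: "0 \<le> \<omega> c" "\<omega> c \<le> 1" and p: "0 \<le> p11" "p11 \<le> p01" "p01 \<le> 1"
  shows "lookahead_value N 2 p01 p11 \<omega> {a,b} =
    2 - expected_misses (1-p01) (p01-p11) (\<omega> a) (\<omega> b) (\<omega> c) 1"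
proof -
  define x where "x v1 v2 = upd_belief p01 p11 \<omega> {a,b} (obs_pair a b v1 v2)" for v1 v2
  have xa: "x v1 v2 a = (if v1 then p11 else p01)"
   and xb: "x v1 v2 b = (if v2 then p11 else p01)"
   and xc: "x v1 v2 c = tau p01 p11 (\<omega> c)" for v1 v2
    unfolding x_def using dist by (auto simp: upd_belief_pair)
  have tc: "p11 \<le> tau p01 p11 (\<omega> c)" "tau p01 p11 (\<omega> c) \<le> p01" using tau_bounds wc p by auto
  have lt: "a < N" "b < N" "c < N" using chans by auto
  have chan: "l = a \<or> l = b \<or> l = c" if "l < N" for l using chans that by blast
  have x_le: "\<forall>l<N. x v1 v2 l \<le> 1" for v1 v2 using chan xa xb xc tc p by fastforce
  note facts = lt dist chan x_le xa xb xc tc p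
  have "best_reward N 2 (x True True) = 1 - (1 - x True True a) * (1 - x True True c)"
    by (rule best_reward_pair) (use facts in fastforce)+
  moreover have "best_reward N 2 (x True False) = 1 - (1 - x True False b) * (1 - x True False c)"
    by (rule best_reward_pair) (use facts in fastforce)+
  moreover have "best_reward N 2 (x False True) = 1 - (1 - x False True a) * (1 - x False True c)"
    by (rule best_reward_pair) (use facts in fastforce)+
  moreover have "best_reward N 2 (x False False) = 1 - (1 - x False False a) * (1 - x False False b)"
    by (rule best_reward_pair) (use facts in fastforce)+
  ultimately have "lookahead_value N 2 p01 p11 \<omega> {a,b} = 1 - (1 - \<omega> a) * (1 - \<omega> b)
     + \<omega> a * \<omega> b * (1 - (1 - p11) * (1 - tau p01 p11 (\<omega> c)))
     + \<omega> a * (1 - \<omega> b) * (1 - (1 - p01) * (1 - tau p01 p11 (\<omega> c)))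
     + (1 - \<omega> a) * \<omega> b * (1 - (1 - p01) * (1 - tau p01 p11 (\<omega> c)))
     + (1 - \<omega> a) * (1 - \<omega> b) * (1 - (1 - p01) * (1 - p01))"
    unfolding lookahead_value_pair[OF dist(1)] x_def[symmetric] by (simp add: xa xb xc)
  also have "\<dots> = 2 - expected_misses (1-p01) (p01-p11) (\<omega> a) (\<omega> b) (\<omega> c) 1"
    unfolding expected_misses_def one_minus_tau min_absorb1[OF wc(2)]
    by (simp add: algebra_simps power2_eq_square)
  finally show ?thesis .
qed


section \<open>The myopic pair minimises the expected number of misses\<close>

text \<open>Starting from the myopic split (a, b sensed; c, d of smaller belief unsensed), every other
  choice of the sensed pair is reached by one or two exchange steps, up to the symmetries.\<close>
lemma expected_misses_min_four:
  assumes same: "{a',b',c',d'} = {a,b,c,d}"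
    and dist': "a'\<noteq>b'" "a'\<noteq>c'" "a'\<noteq>d'" "b'\<noteq>c'" "b'\<noteq>d'" "c'\<noteq>d'"
    and w: "0 \<le> \<omega> a" "\<omega> a \<le> 1" "0 \<le> \<omega> b" "\<omega> b \<le> 1"
      "0 \<le> \<omega> c" "\<omega> c \<le> 1" "0 \<le> \<omega> d" "\<omega> d \<le> 1"
    and order: "\<omega> c \<le> \<omega> a" "\<omega> c \<le> \<omega> b" "\<omega> d \<le> \<omega> a" "\<omega> d \<le> \<omega> b"
    and u: "0 \<le> u" "0 \<le> e" "u + e \<le> 1"
  shows "expected_misses u e (\<omega> a) (\<omega> b) (\<omega> c) (\<omega> d) \<le>
         expected_misses u e (\<omega> a') (\<omega> b') (\<omega> c') (\<omega> d')"
proof -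
  define M where "M = expected_misses u e (\<omega> a) (\<omega> b) (\<omega> c) (\<omega> d)"
  have sym: "M \<le> expected_misses u e x y z v \<Longrightarrow>
      M \<le> expected_misses u e x y z v \<and> M \<le> expected_misses u e y x z v \<and>
      M \<le> expected_misses u e x y v z \<and> M \<le> expected_misses u e y x v z" for x y z v
    by (metis expected_misses_sym_sensed expected_misses_sym_unsensed)
  have ab: "M \<le> expected_misses u e (\<omega> a) (\<omega> b) (\<omega> c) (\<omega> d)" unfolding M_def by simp
  have ac: "M \<le> expected_misses u e (\<omega> a) (\<omega> c) (\<omega> b) (\<omega> d)" unfolding M_def
    by (rule expected_misses_exchange) (use w order u in auto)
  have ad: "M \<le> expected_misses u e (\<omega> a) (\<omega> d) (\<omega> b) (\<omega> c)" unfolding M_def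
    by (subst expected_misses_sym_unsensed, rule expected_misses_exchange) (use w order u in auto)
  have bc: "M \<le> expected_misses u e (\<omega> b) (\<omega> c) (\<omega> a) (\<omega> d)" unfolding M_def
    by (subst expected_misses_sym_sensed, rule expected_misses_exchange) (use w order u in auto)
  have bd: "M \<le> expected_misses u e (\<omega> b) (\<omega> d) (\<omega> a) (\<omega> c)" unfolding M_def
    by (subst expected_misses_sym_sensed, subst expected_misses_sym_unsensed,
        rule expected_misses_exchange) (use w order u in auto)
  have "expected_misses u e (\<omega> a) (\<omega> c) (\<omega> b) (\<omega> d) = expected_misses u e (\<omega> c) (\<omega> a) (\<omega> d) (\<omega> b)"
    by (metis expected_misses_sym_sensed expected_misses_sym_unsensed)
  also have "\<dots> \<le> expected_misses u e (\<omega> c) (\<omega> d) (\<omega> a) (\<omega> b)"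
    by (rule expected_misses_exchange) (use w order u in auto)
  finally have cd: "M \<le> expected_misses u e (\<omega> c) (\<omega> d) (\<omega> a) (\<omega> b)" using ac by simp
  have "a' \<in> {a,b,c,d}" "b' \<in> {a,b,c,d}" "c' \<in> {a,b,c,d}" "d' \<in> {a,b,c,d}" using same by auto
  then show ?thesis
    unfolding M_def[symmetric] using dist' sym[OF ab] sym[OF ac] sym[OF ad] sym[OF bc] sym[OF bd] sym[OF cd]
    by auto
qed

lemma expected_misses_min_three:
  assumes same: "{a',b',c'} = {a,b,c}" and dist': "a'\<noteq>b'" "a'\<noteq>c'" "b'\<noteq>c'"
    and w: "0 \<le> \<omega> a" "\<omega> a \<le> 1" "0 \<le> \<omega> b" "\<omega> b \<le> 1" "0 \<le> \<omega> c" "\<omega> c \<le> 1"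
    and order: "\<omega> c \<le> \<omega> a" "\<omega> c \<le> \<omega> b"
    and u: "0 \<le> u" "0 \<le> e" "u + e \<le> 1"
  shows "expected_misses u e (\<omega> a) (\<omega> b) (\<omega> c) 1 \<le> expected_misses u e (\<omega> a') (\<omega> b') (\<omega> c') 1"
proof -
  define M where "M = expected_misses u e (\<omega> a) (\<omega> b) (\<omega> c) 1"
  have sym: "M \<le> expected_misses u e x y z 1 \<Longrightarrow>
      M \<le> expected_misses u e x y z 1 \<and> M \<le> expected_misses u e y x z 1" for x y z
    by (metis expected_misses_sym_sensed)
  have ab: "M \<le> expected_misses u e (\<omega> a) (\<omega> b) (\<omega> c) 1" unfolding M_def by simp
  have ac: "M \<le> expected_misses u e (\<omega> a) (\<omega> c) (\<omega> b) 1" unfolding M_def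
    by (rule expected_misses_exchange) (use w order u in auto)
  have bc: "M \<le> expected_misses u e (\<omega> b) (\<omega> c) (\<omega> a) 1" unfolding M_def
    by (subst expected_misses_sym_sensed, rule expected_misses_exchange) (use w order u in auto)
  have "a' \<in> {a,b,c}" "b' \<in> {a,b,c}" "c' \<in> {a,b,c}" using same by auto
  then show ?thesis unfolding M_def[symmetric] using dist' sym[OF ab] sym[OF ac] sym[OF bc] by auto
qed


lemma complement_of_pair:
  assumes "valid_action N 2 {a,b}" "a \<noteq> b"
  shows "card ({..<N} - {a,b}) = N - 2" "{..<N} = {a,b} \<union> ({..<N} - {a,b})"
  using assms unfolding valid_action_def by (auto simp: card_Diff_subset)

lemma remaining_channel_three:
  assumes "valid_action N 2 {a,b}" "a \<noteq> b" "N = 3"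
  obtains c where "{..<N} = {a,b,c}" "c \<noteq> a" "c \<noteq> b"
proof -
  have "card ({..<N} - {a,b}) = 1" using complement_of_pair[OF assms(1,2)] assms(3) by simp
  then obtain c where "{..<N} - {a,b} = {c}" by (auto simp: card_1_singleton_iff)
  then show ?thesis using that complement_of_pair(2)[OF assms(1,2)] by auto
qed

lemma remaining_channels_four:
  fixes \<omega> :: "nat \<Rightarrow> real"
  assumes "valid_action N 2 {a,b}" "a \<noteq> b" "N = 4"
  obtains c d where "{..<N} = {a,b,c,d}" "c \<noteq> a" "c \<noteq> b" "d \<noteq> a" "d \<noteq> b" "c \<noteq> d"
    "\<omega> c \<le> \<omega> d"
proof -
  have "card ({..<N} - {a,b}) = 2" using complement_of_pair[OF assms(1,2)] assms(3) by simp
  then obtain c d where cd: "{..<N} - {a,b} = {c,d}" "c \<noteq> d" by (auto simp: card_2_iff)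
  then have chans: "{..<N} = {a,b,c,d}" "{..<N} = {a,b,d,c}"
    using complement_of_pair(2)[OF assms(1,2)] by auto
  have ne: "c \<noteq> a" "c \<noteq> b" "d \<noteq> a" "d \<noteq> b" using cd by auto
  show ?thesis
  proof (cases "\<omega> c \<le> \<omega> d")
    case True
    then show ?thesis using that[OF chans(1) ne cd(2)] by blast
  next
    case False
    then show ?thesis using that[OF chans(2) ne(3,4,1,2) cd(2)[symmetric]] by simp
  qed
qed

lemma myopic_first_action_best_three:
  assumes N: "N = 3" and p: "0 \<le> p11" "p11 \<le> p01" "p01 \<le> 1"
    and \<omega>: "\<forall>i<N. 0 \<le> \<omega> i \<and> \<omega> i \<le> 1"
    and my: "myopic_action N 2 \<omega> {a,b}" "a \<noteq> b" and A: "valid_action N 2 {a',b'}" "a' \<noteq> b'"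
  shows "lookahead_value N 2 p01 p11 \<omega> {a',b'} \<le> lookahead_value N 2 p01 p11 \<omega> {a,b}"
proof -
  have vm: "valid_action N 2 {a,b}" using my by (simp add: myopic_action_def)
  obtain c where c: "{..<N} = {a,b,c}" "c \<noteq> a" "c \<noteq> b"
    using remaining_channel_three[OF vm my(2) N] .
  obtain c' where c': "{..<N} = {a',b',c'}" "c' \<noteq> a'" "c' \<noteq> b'"
    using remaining_channel_three[OF A N] .
  have w: "0 \<le> \<omega> i" "\<omega> i \<le> 1" if "i < N" for i using \<omega> that by auto
  have lt: "a < N" "b < N" "c < N" "c' < N" using c(1) c'(1) by auto
  have order: "\<omega> c \<le> \<omega> a" "\<omega> c \<le> \<omega> b" using my c lt unfolding myopic_action_def by auto
  have "lookahead_value N 2 p01 p11 \<omega> {a,b} = 2 - expected_misses (1-p01) (p01-p11) (\<omega> a) (\<omega> b) (\<omega> c) 1"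
    using lookahead_value_three[where \<omega>=\<omega> and a=a and b=b and c=c, OF c(1) my(2) c(2-3)[symmetric] w[OF lt(3)] p] .
  moreover have "lookahead_value N 2 p01 p11 \<omega> {a',b'} =
      2 - expected_misses (1-p01) (p01-p11) (\<omega> a') (\<omega> b') (\<omega> c') 1"
    using lookahead_value_three[where \<omega>=\<omega> and a=a' and b=b' and c=c', OF c'(1) A(2) c'(2-3)[symmetric] w[OF lt(4)] p] .
  moreover have "expected_misses (1-p01) (p01-p11) (\<omega> a) (\<omega> b) (\<omega> c) 1
      \<le> expected_misses (1-p01) (p01-p11) (\<omega> a') (\<omega> b') (\<omega> c') 1"
  proof (rule expected_misses_min_three[where \<omega>=\<omega> and a=a and b=b and c=c and a'=a' and b'=b' and c'=c'])
    show "{a',b',c'} = {a,b,c}" using c(1) c'(1) by simp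
  qed (use c'(2-3) A(2) w[OF lt(1)] w[OF lt(2)] w[OF lt(3)] order p in auto)
  ultimately show ?thesis by simp
qed

lemma myopic_first_action_best_four:
  assumes N: "N = 4" and p: "0 \<le> p11" "p11 \<le> p01" "p01 \<le> 1"
    and \<omega>: "\<forall>i<N. 0 \<le> \<omega> i \<and> \<omega> i \<le> 1"
    and my: "myopic_action N 2 \<omega> {a,b}" "a \<noteq> b" and A: "valid_action N 2 {a',b'}" "a' \<noteq> b'"
  shows "lookahead_value N 2 p01 p11 \<omega> {a',b'} \<le> lookahead_value N 2 p01 p11 \<omega> {a,b}"
proof -
  have vm: "valid_action N 2 {a,b}" using my by (simp add: myopic_action_def)
  obtain c d where cd: "{..<N} = {a,b,c,d}" "c \<noteq> a" "c \<noteq> b" "d \<noteq> a" "d \<noteq> b" "c \<noteq> d"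
    "\<omega> c \<le> \<omega> d"
    using remaining_channels_four[OF vm my(2) N] .
  obtain c' d' where cd': "{..<N} = {a',b',c',d'}" "c' \<noteq> a'" "c' \<noteq> b'" "d' \<noteq> a'" "d' \<noteq> b'"
    "c' \<noteq> d'" "\<omega> c' \<le> \<omega> d'"
    using remaining_channels_four[OF A N] .
  have w: "0 \<le> \<omega> i" "\<omega> i \<le> 1" if "i < N" for i using \<omega> that by auto
  have lt: "a < N" "b < N" "c < N" "d < N" "c' < N" "d' < N" using cd(1) cd'(1) by auto
  have order: "\<omega> c \<le> \<omega> a" "\<omega> c \<le> \<omega> b" "\<omega> d \<le> \<omega> a" "\<omega> d \<le> \<omega> b"
    using my cd lt unfolding myopic_action_def by auto
  have "lookahead_value N 2 p01 p11 \<omega> {a,b} =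
      2 - expected_misses (1-p01) (p01-p11) (\<omega> a) (\<omega> b) (\<omega> c) (\<omega> d)"
    using lookahead_value_four[where \<omega>=\<omega> and a=a and b=b and c=c and d=d,
        OF cd(1) my(2) cd(2,4)[symmetric] cd(3,5)[symmetric] cd(6,7) w[OF lt(3)] w[OF lt(4)] p] .
  moreover have "lookahead_value N 2 p01 p11 \<omega> {a',b'} =
      2 - expected_misses (1-p01) (p01-p11) (\<omega> a') (\<omega> b') (\<omega> c') (\<omega> d')"
    using lookahead_value_four[where \<omega>=\<omega> and a=a' and b=b' and c=c' and d=d',
        OF cd'(1) A(2) cd'(2,4)[symmetric] cd'(3,5)[symmetric] cd'(6,7) w[OF lt(5)] w[OF lt(6)] p] .
  moreover have "expected_misses (1-p01) (p01-p11) (\<omega> a) (\<omega> b) (\<omega> c) (\<omega> d)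
      \<le> expected_misses (1-p01) (p01-p11) (\<omega> a') (\<omega> b') (\<omega> c') (\<omega> d')"
  proof (rule expected_misses_min_four[where \<omega>=\<omega> and a=a and b=b and c=c and d=d
        and a'=a' and b'=b' and c'=c' and d'=d'])
    show "{a',b',c',d'} = {a,b,c,d}" using cd(1) cd'(1) by simp
  qed (use cd'(2-6) A(2) w[OF lt(1)] w[OF lt(2)] w[OF lt(3)] w[OF lt(4)] order p in auto)
  ultimately show ?thesis by simp
qed

lemma myopic_first_action_best:
  assumes N: "2 \<le> N" "N \<le> 4" and p: "0 \<le> p11" "p11 \<le> p01" "p01 \<le> 1"
    and \<omega>: "\<forall>i<N. 0 \<le> \<omega> i \<and> \<omega> i \<le> 1"
    and my: "myopic_action N 2 \<omega> Am" and A: "valid_action N 2 A"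
  shows "lookahead_value N 2 p01 p11 \<omega> A \<le> lookahead_value N 2 p01 p11 \<omega> Am"
proof -
  have vm: "valid_action N 2 Am" using my by (simp add: myopic_action_def)
  obtain a b where ab: "Am = {a,b}" "a \<noteq> b" using vm unfolding valid_action_def card_2_iff by auto
  obtain a' b' where ab': "A = {a',b'}" "a' \<noteq> b'" using A unfolding valid_action_def card_2_iff by auto
  consider "N = 2" | "N = 3" | "N = 4" using N by linarith
  then show ?thesis
  proof cases
    case 1
    have "A = {..<N}" "Am = {..<N}"
      using A vm 1 unfolding valid_action_def by (simp_all add: card_subset_eq)
    then show ?thesis by simp
  next
    case 2
    then show ?thesis
      using myopic_first_action_best_three[OF _ p \<omega>] my A ab ab' by simp
  next
    case 3
    then show ?thesis
      using myopic_first_action_best_four[OF _ p \<omega>] my A ab ab' by simp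
  qed
qed


theorem theorem2:
  fixes N :: nat and p01 p11 :: real and \<omega> :: "nat \<Rightarrow> real" and \<pi>m :: policy2
  assumes "2 \<le> N" and "N \<le> 4"
    and "0 \<le> p01" and "p01 \<le> 1" and "0 \<le> p11" and "p11 \<le> 1"
    and "p11 < p01"
    and "\<forall>i<N. 0 \<le> \<omega> i \<and> \<omega> i \<le> 1"
    and "myopic_policy2 N 2 p01 p11 \<omega> \<pi>m"
  shows "is_policy2 N 2 \<pi>m \<and>
         value2 p01 p11 \<omega> \<pi>m = (MAX \<pi> \<in> {\<pi>. is_policy2 N 2 \<pi>}. value2 p01 p11 \<omega> \<pi>)"
proof (rule myopic_policy2_optimal[OF assms(9,8,4,6)])
  fix A assume "valid_action N 2 A"
  moreover have "myopic_action N 2 \<omega> (fst \<pi>m)"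
    using assms(9) by (simp add: myopic_policy2_def)
  moreover have "p11 \<le> p01" using assms(7) by simp
  ultimately show "lookahead_value N 2 p01 p11 \<omega> A \<le> lookahead_value N 2 p01 p11 \<omega> (fst \<pi>m)"
    using myopic_first_action_best assms(1,2,4,5,8) by blast
qed

end
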